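(* Regard $\mathbb{I}=[0,1]$ as a $\mathbb{U}$-poset with action given by evaluation. Then for all $a,b,r\in\mathbb{I}$: $a\le_r b$ iff $a\le b\dotplus r$. Consequently $\rho(a,b)=a\dotminus b$ and $\mathrm{dist}(a,b)=|a-b|$.
   Context: $\mathbb{U}$ is the monoid (under composition) of surjective monotone maps $\mathbb{I}\to\mathbb{I}$. $\dotplus,\dotminus$ denote truncated addition and subtraction on $\mathbb{I}$ ($s\dotplus t=\min(s+t,1)$, $s\dotminus t=\max(s-t,0)$). In a $\mathbb{U}$-poset $A$ (poset with a $\mathbb{U}$-action monotone in both variables), $a\le_r b$ means: for all $u,v\in\mathbb{U}$ with $u(t\dotplus r)\le v(t)$ for all $t\in\mathbb{I}$, $u(a)\le v(b)$. $\rho(a,b):=\bigwedge\{r\in\mathbb{I}\mid a\le_r b\}$, $\mathrm{dist}(a,b):=\rho(a,b)\vee\rho(b,a)$. *)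

theory Defs
  imports Complex_Main
begin

text \<open>The monoid U: surjective monotone maps I -> I (only their values on I matter).\<close>
definition UU :: "(real \<Rightarrow> real) set" where
  "UU = {u. u ` {0..1} = {0..1} \<and> mono_on {0..1} u}"

definition tplus :: "real \<Rightarrow> real \<Rightarrow> real" where
  "tplus s t = min (s + t) 1"

definition tminus :: "real \<Rightarrow> real \<Rightarrow> real" where
  "tminus s t = max (s - t) 0"

definition le_r :: "((real \<Rightarrow> real) \<Rightarrow> 'a \<Rightarrow> 'a::order) \<Rightarrow> 'a \<Rightarrow> 'a \<Rightarrow> real \<Rightarrow> bool" where
  "le_r act a b r =
     (\<forall>u\<in>UU. \<forall>v\<in>UU. (\<forall>t\<in>{0..1}. u (tplus t r) \<le> v t) \<longrightarrow> act u a \<le> act v b)"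

definition rho :: "((real \<Rightarrow> real) \<Rightarrow> 'a \<Rightarrow> 'a::order) \<Rightarrow> 'a \<Rightarrow> 'a \<Rightarrow> real" where
  "rho act a b = Inf {r \<in> {0..1}. le_r act a b r}"

definition Udist :: "((real \<Rightarrow> real) \<Rightarrow> 'a \<Rightarrow> 'a::order) \<Rightarrow> 'a \<Rightarrow> 'a \<Rightarrow> real" where
  "Udist act a b = max (rho act a b) (rho act b a)"

definition evalact :: "(real \<Rightarrow> real) \<Rightarrow> real \<Rightarrow> real" where
  "evalact u x = u x"

end

theory Submission
  imports Defs
begin

text \<open>If \<open>a \<le> b \<dotplus> r\<close>, monotonicity of \<open>u\<close> gives \<open>u a \<le> u (b \<dotplus> r) \<le> v b\<close>. If instead
  \<open>a > b + r\<close>, the linear ramp \<open>u\<close> rising from 0 at \<open>b + r\<close> to 1 at \<open>a\<close>, paired with the same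
  ramp \<open>v\<close> shifted left by \<open>r\<close>, satisfies \<open>u (t \<dotplus> r) \<le> v t\<close> but \<open>u a = 1 > 0 = v b\<close>.
  Hence the admissible \<open>r\<close> form the interval \<open>[a \<dotminus> b, 1]\<close>, whose infimum is \<open>a \<dotminus> b\<close>.\<close>

definition ramp :: "real \<Rightarrow> real \<Rightarrow> real \<Rightarrow> real" where
  "ramp c d s = max 0 (min 1 ((s - c) / d))"

lemma ramp_mono:
  assumes "d > 0" and "s \<le> s'"
  shows "ramp c d s \<le> ramp c d s'"
proof -
  have "(s - c) / d \<le> (s' - c) / d"
    using assms by (intro divide_right_mono) auto
  then show ?thesis
    unfolding ramp_def by (intro max.mono min.mono) auto
qed

lemma ramp_shift: "ramp (c + r) d (s + r) = ramp c d s"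
  by (simp add: ramp_def)

lemma ramp_in_UU:
  assumes d: "d > 0" and "0 \<le> c" and "c + d \<le> 1"
  shows "ramp c d \<in> UU"
proof -
  have "{0..1} \<subseteq> ramp c d ` {0..1}"
  proof
    fix y :: real
    assume y: "y \<in> {0..1}"
    have "0 \<le> y * d" and "y * d \<le> d"
      using y d by (auto intro: mult_left_le_one_le)
    then have "c + y * d \<in> {0..1}"
      using assms unfolding atLeastAtMost_iff by linarith
    moreover have "ramp c d (c + y * d) = y"
      using y d by (simp add: ramp_def)
    ultimately show "y \<in> ramp c d ` {0..1}"
      by (metis image_eqI)
  qed
  moreover have "ramp c d ` {0..1} \<subseteq> {0..1}"
    by (auto simp: ramp_def)
  moreover have "mono_on {0..1} (ramp c d)"
    using d by (auto intro: mono_onI ramp_mono)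
  ultimately show ?thesis
    unfolding UU_def by blast
qed

lemma le_r_evalact_if_le_tplus:
  assumes "a \<in> {0..1}" and "b \<in> {0..1}" and "r \<ge> 0" and "a \<le> tplus b r"
  shows "le_r evalact a b r"
  unfolding le_r_def evalact_def
proof (intro ballI impI)
  fix u v
  assume u: "u \<in> UU" and "v \<in> UU" and uv: "\<forall>t\<in>{0..1}. u (tplus t r) \<le> v t"
  have "tplus b r \<in> {0..1}"
    using assms unfolding tplus_def by auto
  moreover have "mono_on {0..1} u"
    using u by (simp add: UU_def)
  ultimately have "u a \<le> u (tplus b r)"
    using assms by (simp add: mono_onD)
  also have "\<dots> \<le> v b"
    using uv assms by blast
  finally show "u a \<le> v b" .
qed

lemma le_tplus_if_le_r_evalact:
  assumes a: "a \<in> {0..1}" and b: "b \<in> {0..1}" and r: "r \<ge> 0"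
    and le: "le_r evalact a b r"
  shows "a \<le> tplus b r"
proof (rule ccontr)
  assume "\<not> a \<le> tplus b r"
  then have gap: "b + r < a"
    using a unfolding tplus_def by auto
  define d where "d = a - (b + r)"
  have d: "d > 0"
    using gap by (simp add: d_def)
  have UU: "ramp (b + r) d \<in> UU" "ramp b d \<in> UU"
    using d a b r by (auto simp: d_def intro!: ramp_in_UU)
  have "ramp (b + r) d (tplus t r) \<le> ramp b d t" for t
  proof -
    have "ramp (b + r) d (tplus t r) \<le> ramp (b + r) d (t + r)"
      using d by (intro ramp_mono) (auto simp: tplus_def)
    then show ?thesis
      by (simp only: ramp_shift)
  qed
  then have "ramp (b + r) d a \<le> ramp b d b"
    using le UU unfolding le_r_def evalact_def by blast
  moreover have "ramp (b + r) d a = 1" and "ramp b d b = 0"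
    using d by (auto simp: ramp_def d_def)
  ultimately show False
    by simp
qed

lemma le_r_evalact_iff:
  assumes "a \<in> {0..1}" and "b \<in> {0..1}" and "r \<ge> 0"
  shows "le_r evalact a b r \<longleftrightarrow> a \<le> tplus b r"
  using assms le_r_evalact_if_le_tplus le_tplus_if_le_r_evalact by blast

lemma rho_evalact:
  assumes a: "a \<in> {0..1}" and b: "b \<in> {0..1}"
  shows "rho evalact a b = tminus a b"
proof -
  have "{r \<in> {0..1}. le_r evalact a b r} = {tminus a b..1}"
    using a b by (auto simp: le_r_evalact_iff tplus_def tminus_def)
  moreover have "tminus a b \<le> 1"
    using a b by (simp add: tminus_def)
  ultimately show ?thesis
    unfolding rho_def by simp
qed

theorem proposition4p5:
  shows "\<forall>a\<in>{0..1::real}. \<forall>b\<in>{0..1::real}.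
           (\<forall>r\<in>{0..1::real}. le_r evalact a b r \<longleftrightarrow> a \<le> tplus b r)
         \<and> rho evalact a b = tminus a b
         \<and> Udist evalact a b = \<bar>a - b\<bar>"
  by (auto simp: le_r_evalact_iff rho_evalact Udist_def tminus_def)

end
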